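(* Let $n\ge1$. A temporal theory $\Gamma$ is $\mathrm{ITL}^{\mathrm{BD}_n}$-consistent if and only if $\Gamma$ is $\mathrm{LTL}$-consistent.
   Context: Fix a countable set $\mathbb{P}$ of atoms. Temporal formulas: $\varphi ::= p\mid\bot\mid\varphi\wedge\varphi\mid\varphi\vee\varphi\mid\varphi\to\varphi\mid\circ\varphi\mid\varphi\,\mathsf{U}\,\varphi\mid\varphi\,\mathsf{R}\,\varphi$. An intuitionistic temporal frame is $(W,\preccurlyeq,S)$ with $W\ne\emptyset$, $\preccurlyeq$ a partial order, $S:W\to W$ forward confluent ($w\preccurlyeq v\Rightarrow S(w)\preccurlyeq S(v)$); persistent if also backward confluent (if $S(w)=v\preccurlyeq u$ then some $t\succcurlyeq w$ has $S(t)=u$). A model adds $V:W\to2^{\mathbb{P}}$ monotone along $\preccurlyeq$. Satisfaction: atoms via $V$; $\bot$ never; $\wedge,\vee$ pointwise; $M,w\models\varphi\to\psi$ iff for all $v\succcurlyeq w$, $M,v\models\varphi$ implies $M,v\models\psi$; $\circ\varphi$ at $w$ iff $\varphi$ at $S(w)$; $\varphi\,\mathsf{U}\,\psi$: some $k\ge0$ with $\psi$ at $S^k(w)$ and $\varphi$ at $S^i(w)$ for all $0\le i<k$; $\varphi\,\mathsf{R}\,\psi$: for all $k\ge0$, $\psi$ at $S^k(w)$ or $\varphi$ at some $S^i(w)$, $0\le i<k$. Depth $\le n$: no chain of $n+1$ pairwise distinct $\preccurlyeq$-related worlds. $\mathrm{ITL}^{\mathrm{BD}_n}$-models are models on persistent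 frames of depth $\le n$; $\mathrm{LTL}$-models are $\mathrm{ITL}^{\mathrm{BD}_1}$-models (i.e. $\preccurlyeq$ is the identity). $\Gamma$ is $\mathsf{L}$-consistent if there exist an $\mathsf{L}$-model $M$ and a world $w$ with $M,w\models\gamma$ for all $\gamma\in\Gamma$. *)

theory Defs
  imports Main "HOL-Library.Countable"
begin

datatype 'p fm =
    Atom 'p
  | Bot
  | And "'p fm" "'p fm"
  | Or "'p fm" "'p fm"
  | Imp "'p fm" "'p fm"
  | Next "'p fm"
  | Until "'p fm" "'p fm"
  | Release "'p fm" "'p fm"

definition itl_frame :: "'w set \<Rightarrow> 'w rel \<Rightarrow> ('w \<Rightarrow> 'w) \<Rightarrow> bool" where
  "itl_frame W R S \<longleftrightarrow>
     W \<noteq> {} \<and> partial_order_on W R \<and> (\<forall>w\<in>W. S w \<in> W) \<and>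
     (\<forall>w v. (w, v) \<in> R \<longrightarrow> (S w, S v) \<in> R)"

definition backward_confluent :: "'w set \<Rightarrow> 'w rel \<Rightarrow> ('w \<Rightarrow> 'w) \<Rightarrow> bool" where
  "backward_confluent W R S \<longleftrightarrow>
     (\<forall>w\<in>W. \<forall>u. (S w, u) \<in> R \<longrightarrow> (\<exists>t. (w, t) \<in> R \<and> S t = u))"

definition persistent_frame :: "'w set \<Rightarrow> 'w rel \<Rightarrow> ('w \<Rightarrow> 'w) \<Rightarrow> bool" where
  "persistent_frame W R S \<longleftrightarrow> itl_frame W R S \<and> backward_confluent W R S"

definition depth_le :: "nat \<Rightarrow> 'w set \<Rightarrow> 'w rel \<Rightarrow> bool" where
  "depth_le n W R \<longleftrightarrow>
     \<not> (\<exists>C. C \<subseteq> W \<and> card C = n + 1 \<and>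
            (\<forall>x\<in>C. \<forall>y\<in>C. (x, y) \<in> R \<or> (y, x) \<in> R))"

definition monotone_val :: "'w set \<Rightarrow> 'w rel \<Rightarrow> ('w \<Rightarrow> 'p set) \<Rightarrow> bool" where
  "monotone_val W R V \<longleftrightarrow> (\<forall>w v. (w, v) \<in> R \<longrightarrow> V w \<subseteq> V v)"

primrec sat :: "'w rel \<Rightarrow> ('w \<Rightarrow> 'w) \<Rightarrow> ('w \<Rightarrow> 'p set) \<Rightarrow> 'w \<Rightarrow> 'p fm \<Rightarrow> bool" where
  "sat R S V w (Atom p) \<longleftrightarrow> p \<in> V w"
| "sat R S V w Bot \<longleftrightarrow> False"
| "sat R S V w (And \<phi> \<psi>) \<longleftrightarrow> sat R S V w \<phi> \<and> sat R S V w \<psi>"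
| "sat R S V w (Or \<phi> \<psi>) \<longleftrightarrow> sat R S V w \<phi> \<or> sat R S V w \<psi>"
| "sat R S V w (Imp \<phi> \<psi>) \<longleftrightarrow>
     (\<forall>v. (w, v) \<in> R \<longrightarrow> sat R S V v \<phi> \<longrightarrow> sat R S V v \<psi>)"
| "sat R S V w (Next \<phi>) \<longleftrightarrow> sat R S V (S w) \<phi>"
| "sat R S V w (Until \<phi> \<psi>) \<longleftrightarrow>
     (\<exists>k. sat R S V ((S ^^ k) w) \<psi> \<and> (\<forall>i<k. sat R S V ((S ^^ i) w) \<phi>))"
| "sat R S V w (Release \<phi> \<psi>) \<longleftrightarrow>
     (\<forall>k. sat R S V ((S ^^ k) w) \<psi> \<or> (\<exists>i<k. sat R S V ((S ^^ i) w) \<phi>))"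

definition ITL_BD_model :: "nat \<Rightarrow> 'w set \<Rightarrow> 'w rel \<Rightarrow> ('w \<Rightarrow> 'w) \<Rightarrow> ('w \<Rightarrow> 'p set) \<Rightarrow> bool" where
  "ITL_BD_model n W R S V \<longleftrightarrow>
     persistent_frame W R S \<and> depth_le n W R \<and> monotone_val W R V"

definition LTL_model :: "'w set \<Rightarrow> 'w rel \<Rightarrow> ('w \<Rightarrow> 'w) \<Rightarrow> ('w \<Rightarrow> 'p set) \<Rightarrow> bool" where
  "LTL_model W R S V \<longleftrightarrow> ITL_BD_model 1 W R S V"

definition consistent ::
  "('w set \<Rightarrow> 'w rel \<Rightarrow> ('w \<Rightarrow> 'w) \<Rightarrow> ('w \<Rightarrow> 'p set) \<Rightarrow> bool) \<Rightarrow> 'p fm set \<Rightarrow> bool" where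
  "consistent L \<Gamma> \<longleftrightarrow>
     (\<exists>W R S V w. L W R S V \<and> w \<in> W \<and> (\<forall>\<gamma>\<in>\<Gamma>. sat R S V w \<gamma>))"

end

theory Submission
  imports Defs
begin

text \<open>Satisfaction is persistent along the order, so whatever holds at w holds at
  every world above w, and bounded depth provides a maximal world above w. By
  backward confluence the maximal worlds are closed under S; on them the order is
  the identity, so intuitionistic implication becomes classical and the maximal
  worlds form an LTL model. Conversely an LTL model has depth 1 \<le> n.\<close>

lemma funpow_preserves_rel:
  assumes "\<forall>w v. (w, v) \<in> R \<longrightarrow> (S w, S v) \<in> R" and "(w, v) \<in> R"
  shows "((S ^^ k) w, (S ^^ k) v) \<in> R"
  using assms by (induction k) auto

lemma sat_persistent:
  assumes fc: "\<forall>w v. (w, v) \<in> R \<longrightarrow> (S w, S v) \<in> R" and "trans R"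
    and "monotone_val W R V"
  shows "(w, v) \<in> R \<Longrightarrow> sat R S V w \<phi> \<Longrightarrow> sat R S V v \<phi>"
proof (induction \<phi> arbitrary: w v)
  case (Atom p)
  then show ?case using \<open>monotone_val W R V\<close> by (auto simp: monotone_val_def)
next
  case (Imp \<phi> \<psi>)
  then show ?case using \<open>trans R\<close> by (auto dest: transD)
next
  case (Next \<phi>)
  then show ?case using fc by auto
next
  case (Until \<phi> \<psi>)
  then show ?case using funpow_preserves_rel[OF fc] by simp blast
next
  case (Release \<phi> \<psi>)
  then show ?case using funpow_preserves_rel[OF fc] by simp blast
qed auto

definition maximal_worlds :: "'w set \<Rightarrow> 'w rel \<Rightarrow> 'w set" where
  "maximal_worlds W R = {m \<in> W. \<forall>v. (m, v) \<in> R \<longrightarrow> v = m}"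

lemma funpow_closed:
  assumes "\<forall>m\<in>M. S m \<in> M" and "m \<in> M"
  shows "(S ^^ k) m \<in> M"
  using assms by (induction k) auto

lemma sat_discrete_on_maximal_worlds:
  assumes closed: "\<forall>m\<in>M. S m \<in> M" and "M \<subseteq> maximal_worlds W R" and "refl_on W R"
  shows "m \<in> M \<Longrightarrow> sat R S V m \<phi> \<longleftrightarrow> sat (Id_on M) S V m \<phi>"
proof (induction \<phi> arbitrary: m)
  case (Imp \<phi> \<psi>)
  have "(m, v) \<in> R \<longleftrightarrow> v = m" for v
    using Imp.prems assms(2,3) by (auto simp: maximal_worlds_def refl_on_def)
  then show ?case using Imp by auto
next
  case (Next \<phi>)
  then show ?case using closed by auto
next
  case (Until \<phi> \<psi>)
  then show ?case using funpow_closed[OF closed] by simp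
next
  case (Release \<phi> \<psi>)
  then show ?case using funpow_closed[OF closed] by simp
qed auto

lemma maximal_worlds_closed:
  assumes "backward_confluent W R S" and "\<forall>w\<in>W. S w \<in> W" and "m \<in> maximal_worlds W R"
  shows "S m \<in> maximal_worlds W R"
proof -
  have "u = S m" if su: "(S m, u) \<in> R" for u
  proof -
    obtain t where "(m, t) \<in> R" and "S t = u"
      using assms(1,3) su unfolding backward_confluent_def maximal_worlds_def by blast
    then show ?thesis using assms(3) unfolding maximal_worlds_def by blast
  qed
  then show ?thesis using assms(2,3) unfolding maximal_worlds_def by blast
qed

lemma strict_chain_violates_depth:
  assumes po: "partial_order_on W R"
    and chain: "\<And>i. f i \<in> W \<and> (f i, f (Suc i)) \<in> R \<and> f (Suc i) \<noteq> f i"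
  shows "\<not> depth_le n W R"
proof -
  have "refl_on W R" and "trans R" and "antisym R"
    using partial_order_onD[OF po] by auto
  have mono: "(f i, f j) \<in> R" if "i \<le> j" for i j
  proof (rule transitive_stepwise_le[where R = "\<lambda>i j. (f i, f j) \<in> R", OF that])
    show "(f x, f x) \<in> R" for x using chain \<open>refl_on W R\<close> by (simp add: refl_on_def)
    show "(f x, f z) \<in> R" if "(f x, f y) \<in> R" "(f y, f z) \<in> R" for x y z
      using that \<open>trans R\<close> by (blast dest: transD)
    show "(f k, f (Suc k)) \<in> R" for k using chain by blast
  qed
  have "f i \<noteq> f j" if "i < j" for i j
  proof
    assume "f i = f j"
    then have "(f (Suc i), f i) \<in> R" using mono[of "Suc i" j] that by simp
    then show False using chain[of i] \<open>antisym R\<close> by (auto dest: antisymD)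
  qed
  then have "inj f" by (metis injI linorder_neqE_nat)
  then have "card (f ` {0..n}) = n + 1" by (simp add: card_image inj_on_subset)
  moreover have "(x, y) \<in> R \<or> (y, x) \<in> R" if "x \<in> f ` {0..n}" "y \<in> f ` {0..n}" for x y
    using that mono nat_le_linear by blast
  moreover have "f ` {0..n} \<subseteq> W" using chain by blast
  ultimately show ?thesis unfolding depth_le_def by blast
qed

lemma maximal_world_above:
  assumes po: "partial_order_on W R" and "depth_le n W R" and "w \<in> W"
  obtains m where "(w, m) \<in> R" and "m \<in> maximal_worlds W R"
proof -
  have "\<exists>m. (w, m) \<in> R \<and> m \<in> maximal_worlds W R"
  proof (rule ccontr)
    assume no_max: "\<nexists>m. (w, m) \<in> R \<and> m \<in> maximal_worlds W R"
    have "R \<subseteq> W \<times> W" and "refl_on W R" and "trans R"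
      using partial_order_onD[OF po] by auto
    have step: "\<exists>y. (w, y) \<in> R \<and> (x, y) \<in> R \<and> y \<noteq> x" if "(w, x) \<in> R" for x
    proof -
      have "x \<notin> maximal_worlds W R" using that no_max by blast
      moreover have "x \<in> W" using that \<open>R \<subseteq> W \<times> W\<close> by blast
      ultimately obtain y where "(x, y) \<in> R" and "y \<noteq> x" by (auto simp: maximal_worlds_def)
      then show ?thesis using that \<open>trans R\<close> by (blast dest: transD)
    qed
    have "(w, w) \<in> R" using \<open>refl_on W R\<close> \<open>w \<in> W\<close> by (simp add: refl_on_def)
    then obtain f where "\<forall>i. (w, f i) \<in> R \<and> (f i, f (Suc i)) \<in> R \<and> f (Suc i) \<noteq> f i"
      using dependent_nat_choice[where P = "\<lambda>_ x. (w, x) \<in> R"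
          and Q = "\<lambda>_ x y. (x, y) \<in> R \<and> y \<noteq> x"] step by blast
    then have "\<And>i. f i \<in> W \<and> (f i, f (Suc i)) \<in> R \<and> f (Suc i) \<noteq> f i"
      using \<open>R \<subseteq> W \<times> W\<close> by blast
    then show False using strict_chain_violates_depth[OF po] \<open>depth_le n W R\<close> by blast
  qed
  then show ?thesis using that by blast
qed

lemma LTL_model_Id_on:
  assumes "M \<noteq> {}" and "\<forall>m\<in>M. S m \<in> M"
  shows "LTL_model M (Id_on M) S V"
proof -
  have "\<not> (\<exists>C\<subseteq>M. card C = 2 \<and> (\<forall>x\<in>C. \<forall>y\<in>C. (x, y) \<in> Id_on M \<or> (y, x) \<in> Id_on M))"
    by (auto simp: card_2_iff)
  then show ?thesis
    using assms
    unfolding LTL_model_def ITL_BD_model_def persistent_frame_def itl_frame_def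
      backward_confluent_def depth_le_def monotone_val_def
    by (auto simp: partial_order_on_def preorder_on_def refl_on_def trans_def antisym_def)
qed

lemma ITL_BD_model_imp_LTL_model:
  assumes "ITL_BD_model n W R S V" and "w \<in> W"
  obtains M m where "LTL_model M (Id_on M) S V" and "m \<in> M"
    and "\<And>\<phi>. sat R S V w \<phi> \<Longrightarrow> sat (Id_on M) S V m \<phi>"
proof -
  let ?M = "maximal_worlds W R"
  have po: "partial_order_on W R" and fc: "\<forall>w v. (w, v) \<in> R \<longrightarrow> (S w, S v) \<in> R"
    and SW: "\<forall>w\<in>W. S w \<in> W" and bc: "backward_confluent W R S"
    and depth: "depth_le n W R" and mv: "monotone_val W R V"
    using assms(1) unfolding ITL_BD_model_def persistent_frame_def itl_frame_def by simp_all
  have "refl_on W R" and "trans R" using partial_order_onD[OF po] by simp_all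
  obtain m where "(w, m) \<in> R" and "m \<in> ?M"
    using maximal_world_above[OF po depth \<open>w \<in> W\<close>] .
  have closed: "\<forall>m\<in>?M. S m \<in> ?M" using maximal_worlds_closed[OF bc SW] by blast
  have "sat (Id_on ?M) S V m \<phi>" if "sat R S V w \<phi>" for \<phi>
  proof -
    have "sat R S V m \<phi>" using sat_persistent[OF fc \<open>trans R\<close> mv \<open>(w, m) \<in> R\<close> that] .
    then show ?thesis
      using sat_discrete_on_maximal_worlds[OF closed order.refl \<open>refl_on W R\<close> \<open>m \<in> ?M\<close>] by blast
  qed
  moreover have "LTL_model ?M (Id_on ?M) S V"
    using LTL_model_Id_on[OF _ closed] \<open>m \<in> ?M\<close> by blast
  ultimately show ?thesis using that \<open>m \<in> ?M\<close> by metis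
qed

lemma depth_le_mono:
  assumes "depth_le m W R" and "m \<le> n"
  shows "depth_le n W R"
  unfolding depth_le_def
proof
  assume "\<exists>C\<subseteq>W. card C = n + 1 \<and> (\<forall>x\<in>C. \<forall>y\<in>C. (x, y) \<in> R \<or> (y, x) \<in> R)"
  then obtain C where "C \<subseteq> W" and "card C = n + 1"
    and chain: "\<forall>x\<in>C. \<forall>y\<in>C. (x, y) \<in> R \<or> (y, x) \<in> R"
    by blast
  moreover obtain D where "D \<subseteq> C" and "card D = m + 1"
    using obtain_subset_with_card_n[of "m + 1" C] \<open>card C = n + 1\<close> \<open>m \<le> n\<close> by auto
  ultimately have "D \<subseteq> W \<and> card D = m + 1 \<and> (\<forall>x\<in>D. \<forall>y\<in>D. (x, y) \<in> R \<or> (y, x) \<in> R)"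
    by blast
  then show False using assms(1) unfolding depth_le_def by blast
qed

lemma LTL_model_imp_ITL_BD_model:
  assumes "LTL_model W R S V" and "n \<ge> 1"
  shows "ITL_BD_model n W R S V"
  using assms depth_le_mono unfolding LTL_model_def ITL_BD_model_def by blast

theorem lemma4p6:
  fixes n :: nat and \<Gamma> :: "('p::countable) fm set"
  assumes "n \<ge> 1"
  shows "consistent (ITL_BD_model n :: 'w set \<Rightarrow> 'w rel \<Rightarrow> ('w \<Rightarrow> 'w) \<Rightarrow> ('w \<Rightarrow> 'p set) \<Rightarrow> bool) \<Gamma>
     \<longleftrightarrow> consistent (LTL_model :: 'w set \<Rightarrow> 'w rel \<Rightarrow> ('w \<Rightarrow> 'w) \<Rightarrow> ('w \<Rightarrow> 'p set) \<Rightarrow> bool) \<Gamma>"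
proof
  assume "consistent (ITL_BD_model n :: 'w set \<Rightarrow> 'w rel \<Rightarrow> ('w \<Rightarrow> 'w) \<Rightarrow> ('w \<Rightarrow> 'p set) \<Rightarrow> bool) \<Gamma>"
  then obtain W :: "'w set" and R S and V :: "'w \<Rightarrow> 'p set" and w
    where "ITL_BD_model n W R S V" and "w \<in> W" and "\<forall>\<gamma>\<in>\<Gamma>. sat R S V w \<gamma>"
    unfolding consistent_def by blast
  then obtain M m where "LTL_model M (Id_on M) S V" and "m \<in> M"
    and "\<forall>\<gamma>\<in>\<Gamma>. sat (Id_on M) S V m \<gamma>"
    by (metis ITL_BD_model_imp_LTL_model)
  then show "consistent (LTL_model :: 'w set \<Rightarrow> 'w rel \<Rightarrow> ('w \<Rightarrow> 'w) \<Rightarrow> ('w \<Rightarrow> 'p set) \<Rightarrow> bool) \<Gamma>"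
    unfolding consistent_def by blast
next
  assume "consistent (LTL_model :: 'w set \<Rightarrow> 'w rel \<Rightarrow> ('w \<Rightarrow> 'w) \<Rightarrow> ('w \<Rightarrow> 'p set) \<Rightarrow> bool) \<Gamma>"
  then show "consistent (ITL_BD_model n :: 'w set \<Rightarrow> 'w rel \<Rightarrow> ('w \<Rightarrow> 'w) \<Rightarrow> ('w \<Rightarrow> 'p set) \<Rightarrow> bool) \<Gamma>"
    using LTL_model_imp_ITL_BD_model[OF _ assms] unfolding consistent_def by blast
qed

end
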